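(* Let $\mathbb{Z}$ be a finite-dimensional Euclidean space, $L>0$, and let $G:\mathbb{Z}\to\mathbb{Z}$ be $\frac{1}{L}$-co-coercive. Assume there exists $z^*\in\mathbb{Z}$ with $G(z^* )=0$. Let $z^0\in\mathbb{Z}$, let $\gamma_k\ge 0$ ($k\ge0$), and let $\{z^k\}$ be generated by the inexact Halpern iteration: for $k\ge 0$, choose any $\tilde z^k\in\mathbb{Z}$ with $\|G(z^k)-\tilde z^k\|\le\gamma_k$ and set $z^{k+1}=\beta_k z^0+(1-\beta_k)z^k-\eta_k\tilde z^k$, where $\beta_k=1/(k+2)$ and $\eta_k=(1-\beta_k)/L$. Then for every solution $z^*$ with $G(z^* )=0$ and all $k\ge0$, \[ \|G(z^k)\|^2\le \frac{\Big(7L\|z^0-z^*\|+10\sqrt{\sum_{i=0}^{k-1}(i+1)^2\gamma_i^2}\Big)^2}{(k+1)(k+2)}, \qquad \|z^{k+1}-z^k\|^2\le \frac{8\Big(7L\|z^0-z^*\|+11\sqrt{\sum_{i=0}^{k}(i+1)^2\gamma_i^2}\Big)^2}{L^2(k+1)(k+2)}. \] (An empty sum equals $0$.)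
   Context: A map $G:\mathbb{Z}\to\mathbb{Z}$ is $c$-co-coercive ($c>0$) if $\langle G(x_1)-G(x_2),x_1-x_2\rangle\ge c\|G(x_1)-G(x_2)\|^2$ for all $x_1,x_2$. $\|\cdot\|$ is the Euclidean norm. *)

theory Defs
  imports "HOL-Analysis.Analysis"
begin

definition co_coercive :: "real \<Rightarrow> ('a::real_inner \<Rightarrow> 'a) \<Rightarrow> bool" where
  "co_coercive c G \<longleftrightarrow> c > 0 \<and>
     (\<forall>x1 x2. inner (G x1 - G x2) (x1 - x2) \<ge> c * (norm (G x1 - G x2))\<^sup>2)"

end

theory Submission
  imports Defs
begin

(* Along the exact Halpern iteration the Lyapunov function
     V_k = L (k+1) <G z_k, z_k - z_0> + k (k+1)/2 |G z_k|^2
   is nonincreasing by co-coercivity; an oracle error of size gamma_k raises it by at most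
   (k+1)(k+2)/2 gamma_k^2 + (k+1) gamma_k |G z_k|.  Co-coercivity at the zero z* bounds V_k from
   below by (k+1)(k+2)/2 |G z_k|^2 - L (k+1) |z_0 - z*| |G z_k|.  In a strong induction on k the
   error terms are controlled by the earlier gradient bounds and Young's inequality, and the
   gradient estimate is the root bound of the resulting quadratic inequality.
   For the step length, (k+2)(z_(k+1) - z_k) = z_0 - z_k - ((k+1)/L) zt_k.  Since I - G/L is
   nonexpansive, |z_k - z*| exceeds |z_0 - z*| only by the accumulated errors, which controls
   |z_k - z_0|. *)

lemma co_coercive_forward_step_nonexpansive:
  fixes G :: "'a::real_inner \<Rightarrow> 'a"
  assumes "co_coercive c G"
  shows "norm ((x - y) - c *\<^sub>R (G x - G y)) \<le> norm (x - y)"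
proof -
  define v w where "v = G x - G y" and "w = x - y"
  have c: "c > 0" and coco: "c * (norm v)\<^sup>2 \<le> inner v w"
    using assms by (auto simp: co_coercive_def v_def w_def)
  have "(norm (w - c *\<^sub>R v))\<^sup>2 = (norm w)\<^sup>2 - 2 * c * inner v w + c * c * (norm v)\<^sup>2"
    by (simp add: power2_norm_eq_inner inner_diff_left inner_diff_right inner_commute algebra_simps)
  also have "\<dots> \<le> (norm w)\<^sup>2 - c * c * (norm v)\<^sup>2"
    using mult_left_mono[OF coco, of "2 * c"] c by (simp add: algebra_simps)
  also have "\<dots> \<le> (norm w)\<^sup>2"
    by simp
  finally show ?thesis
    unfolding v_def w_def using power2_le_imp_le by simp
qed

(* One step with a = k + 1, u = z_k - z_0, u' = z_(k+1) - z_0, g = G z_k, g' = G z_(k+1) and oracle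
   error e: the hypothesis is the Halpern update multiplied by L (k+2). *)
lemma halpern_lyapunov_identity:
  fixes u u' g g' e :: "'a::real_inner" and L a :: real
  assumes u': "(L * (a + 1)) *\<^sub>R u' = (L * a) *\<^sub>R u - a *\<^sub>R (g + e)"
  shows "L * (a + 1) * inner g' u' + a * (a + 1) / 2 * (norm g')\<^sup>2
           - (L * a * inner g u + (a - 1) * a / 2 * (norm g)\<^sup>2)
       = a * (a + 1) / 2 * (norm e)\<^sup>2 - a * inner g e - a * (a + 1) / 2 * (norm (g' - g + e))\<^sup>2
         - a * (a + 1) * (L * inner (g' - g) (u' - u) - (norm (g' - g))\<^sup>2)"
    (is "?lhs = ?rhs")
proof -
  define r where "r v = L * (a + 1) * inner v u' - L * a * inner v u + a * inner v (g + e)" for v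
  have "r v = 0" for v
    using arg_cong[OF u', of "inner v"] by (simp add: r_def inner_diff_right)
  moreover have "?lhs - ?rhs = (a + 1) * r g' - a * r g"
    by (simp add: r_def power2_norm_eq_inner inner_commute algebra_simps) (simp add: field_simps)
  ultimately show ?thesis
    by simp
qed

lemma halpern_lyapunov_step:
  fixes u u' g g' e :: "'a::real_inner" and L a \<gamma> :: real
  assumes "a \<ge> 0"
    and u': "(L * (a + 1)) *\<^sub>R u' = (L * a) *\<^sub>R u - a *\<^sub>R (g + e)"
    and coco: "(norm (g' - g))\<^sup>2 \<le> L * inner (g' - g) (u' - u)"
    and e: "norm e \<le> \<gamma>"
  shows "L * (a + 1) * inner g' u' + a * (a + 1) / 2 * (norm g')\<^sup>2
       \<le> L * a * inner g u + (a - 1) * a / 2 * (norm g)\<^sup>2 + a * (a + 1) / 2 * \<gamma>\<^sup>2 + a * \<gamma> * norm g"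
proof -
  have "- inner g e \<le> \<gamma> * norm g"
    using norm_cauchy_schwarz[of "- g" e] mult_left_mono[OF e, of "norm g"] by (simp add: mult.commute)
  from mult_left_mono[OF this \<open>a \<ge> 0\<close>]
  have "- (a * inner g e) \<le> a * \<gamma> * norm g"
    by (simp add: mult.assoc)
  moreover have "a * (a + 1) / 2 * (norm e)\<^sup>2 \<le> a * (a + 1) / 2 * \<gamma>\<^sup>2"
    using \<open>a \<ge> 0\<close> e by (intro mult_left_mono power_mono) auto
  moreover have "0 \<le> a * (a + 1) / 2 * (norm (g' - g + e))\<^sup>2"
    using \<open>a \<ge> 0\<close> by simp
  moreover have "0 \<le> a * (a + 1) * (L * inner (g' - g) (u' - u) - (norm (g' - g))\<^sup>2)"
    using \<open>a \<ge> 0\<close> coco by simp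
  ultimately show ?thesis
    using halpern_lyapunov_identity[OF u', of g'] by linarith
qed

lemma sum_inverse_squares_le: "(\<Sum>i<k. 1 / (real i + 1)\<^sup>2) \<le> 2 - 2 / (real k + 1)"
proof (induction k)
  case 0
  then show ?case by simp
next
  case (Suc k)
  have "1 / (real k + 1)\<^sup>2 \<le> 2 / (real k + 1) - 2 / (real k + 2)"
    by (simp add: divide_simps power2_eq_square)
  with Suc show ?case
    by (simp add: add.commute)
qed

lemma mult_le_weighted_sum_squares:
  fixes t s c :: real
  assumes "c > 0"
  shows "t * s \<le> c * t\<^sup>2 + s\<^sup>2 / (4 * c)"
proof -
  have "c * t\<^sup>2 + s\<^sup>2 / (4 * c) - t * s = c * (t - s / (2 * c))\<^sup>2"
    using assms by (simp add: power2_eq_square field_simps)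
  moreover have "0 \<le> c * (t - s / (2 * c))\<^sup>2"
    using assms by simp
  ultimately show ?thesis
    by linarith
qed

(* The constants 7 and 10 make M = 7 A + 10 r satisfy M^2/2 >= A M + 11 r^2 + M^2/20. *)
lemma quadratic_le_bound:
  fixes A r y :: real
  assumes "A \<ge> 0" "r \<ge> 0"
    and "y\<^sup>2 / 2 \<le> A * y + 11 * r\<^sup>2 + (7 * A + 10 * r)\<^sup>2 / 20"
  shows "y \<le> 7 * A + 10 * r"
proof (rule ccontr)
  define M where "M = 7 * A + 10 * r"
  assume "\<not> y \<le> 7 * A + 10 * r"
  then have "0 < (y - M) * ((y + M) / 2 - A)"
    using assms unfolding M_def by (intro mult_pos_pos) auto
  moreover have "(y - M) * ((y + M) / 2 - A) = y * y / 2 - A * y - M * M / 2 + A * M"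
    by (simp add: field_simps)
  moreover have "M * M = 49 * (A * A) + 140 * (A * r) + 100 * (r * r)" "A * M = 7 * (A * A) + 10 * (A * r)"
    unfolding M_def by (simp_all add: algebra_simps)
  moreover have "0 \<le> A * A" "0 \<le> A * r" "0 \<le> r * r"
    using assms by auto
  moreover have "y * y / 2 \<le> A * y + 11 * (r * r) + M * M / 20"
    using assms(3) unfolding M_def power2_eq_square .
  ultimately show False
    by linarith
qed

lemma real_succ_le_sqrt_mult_succ: "real k + 1 \<le> sqrt ((real k + 1) * (real k + 2))"
  by (rule real_le_rsqrt) (simp add: power2_eq_square)

locale inexact_halpern =
  fixes G :: "'a::real_inner \<Rightarrow> 'a"
    and L :: real
    and z zt :: "nat \<Rightarrow> 'a"
    and \<gamma> :: "nat \<Rightarrow> real"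
    and zstar :: 'a
  assumes coco: "co_coercive (1 / L) G"
    and inexact: "\<And>k. norm (G (z k) - zt k) \<le> \<gamma> k"
    and iter: "\<And>k. z (Suc k) =
        (1 / (real k + 2)) *\<^sub>R z 0 + (1 - 1 / (real k + 2)) *\<^sub>R z k
        - ((1 - 1 / (real k + 2)) / L) *\<^sub>R zt k"
    and zstar_sol: "G zstar = 0"
begin

definition init_dist :: real where
  "init_dist = norm (z 0 - zstar)"

definition err_sum :: "nat \<Rightarrow> real" where
  "err_sum k = (\<Sum>i<k. (real i + 1)\<^sup>2 * (\<gamma> i)\<^sup>2)"

definition lyapunov :: "nat \<Rightarrow> real" where
  "lyapunov k = L * (real k + 1) * inner (G (z k)) (z k - z 0)
     + real k * (real k + 1) / 2 * (norm (G (z k)))\<^sup>2"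

lemma L_pos: "L > 0"
  using coco by (simp add: co_coercive_def)

lemma gamma_nonneg: "\<gamma> k \<ge> 0"
  using inexact[of k] norm_ge_zero order_trans by blast

lemma cocoercive_mult_L: "(norm (G x - G y))\<^sup>2 \<le> L * inner (G x - G y) (x - y)"
  using coco L_pos by (simp add: co_coercive_def field_simps)

lemma init_dist_nonneg: "init_dist \<ge> 0"
  by (simp add: init_dist_def)

lemma err_sum_nonneg: "err_sum k \<ge> 0"
  by (simp add: err_sum_def sum_nonneg)

lemma err_sum_mono: "i \<le> k \<Longrightarrow> err_sum i \<le> err_sum k"
  unfolding err_sum_def by (intro sum_mono2) auto

lemma err_sum_Suc: "err_sum (Suc k) = err_sum k + ((real k + 1) * \<gamma> k)\<^sup>2"
  by (simp add: err_sum_def power_mult_distrib)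

lemma halpern_step_centered:
  "(L * (real k + 2)) *\<^sub>R (z (Suc k) - p) = L *\<^sub>R (z 0 - p) + (real k + 1) *\<^sub>R (L *\<^sub>R (z k - p) - zt k)"
proof -
  define a where "a = real k + 1"
  have "a > 0" and k2: "real k + 2 = a + 1"
    by (simp_all add: a_def)
  then have "L * (a + 1) * (1 / (a + 1)) = L"
    "L * (a + 1) * (1 - 1 / (a + 1)) = L * a"
    "L * (a + 1) * ((1 - 1 / (a + 1)) / L) = a"
    using L_pos by (simp_all add: divide_simps)
  then have "(L * (a + 1)) *\<^sub>R z (Suc k) = L *\<^sub>R z 0 + (L * a) *\<^sub>R z k - a *\<^sub>R zt k"
    by (simp add: iter[of k, unfolded k2] scaleR_diff_right scaleR_add_right)
  then show ?thesis
    unfolding k2 a_def[symmetric] by (simp add: scaleR_diff_right algebra_simps)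
qed

lemma lyapunov_step:
  "lyapunov (Suc k) \<le> lyapunov k + (real k + 1) * (real k + 2) / 2 * (\<gamma> k)\<^sup>2
     + (real k + 1) * \<gamma> k * norm (G (z k))"
proof -
  define a where "a = real k + 1"
  have "(L * (a + 1)) *\<^sub>R (z (Suc k) - z 0)
      = (L * a) *\<^sub>R (z k - z 0) - a *\<^sub>R (G (z k) + (zt k - G (z k)))"
    using halpern_step_centered[of k "z 0"] by (simp add: a_def scaleR_diff_right ac_simps)
  moreover have "(norm (G (z (Suc k)) - G (z k)))\<^sup>2
      \<le> L * inner (G (z (Suc k)) - G (z k)) ((z (Suc k) - z 0) - (z k - z 0))"
    using cocoercive_mult_L by simp
  moreover have "norm (zt k - G (z k)) \<le> \<gamma> k"
    using inexact[of k] by (simp add: norm_minus_commute)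
  ultimately have "L * (a + 1) * inner (G (z (Suc k))) (z (Suc k) - z 0)
        + a * (a + 1) / 2 * (norm (G (z (Suc k))))\<^sup>2
      \<le> L * a * inner (G (z k)) (z k - z 0) + (a - 1) * a / 2 * (norm (G (z k)))\<^sup>2
         + a * (a + 1) / 2 * (\<gamma> k)\<^sup>2 + a * \<gamma> k * norm (G (z k))"
    by (intro halpern_lyapunov_step) (simp_all add: a_def)
  then show ?thesis
    by (simp add: lyapunov_def a_def ac_simps)
qed

lemma lyapunov_le_sum:
  "lyapunov k \<le>
     (\<Sum>i<k. (real i + 1) * (real i + 2) / 2 * (\<gamma> i)\<^sup>2 + (real i + 1) * \<gamma> i * norm (G (z i)))"
proof (induction k)
  case 0
  then show ?case by (simp add: lyapunov_def)
next
  case (Suc k)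
  then show ?case using lyapunov_step[of k] by simp
qed

lemma lyapunov_lower_bound:
  "(real k + 1) * (real k + 2) / 2 * (norm (G (z k)))\<^sup>2
     \<le> L * init_dist * ((real k + 1) * norm (G (z k))) + lyapunov k"
proof -
  have "inner (G (z k)) (z 0 - zstar) \<le> norm (G (z k)) * init_dist"
    using norm_cauchy_schwarz[of "G (z k)" "z 0 - zstar"] by (simp add: init_dist_def)
  then have "L * inner (G (z k)) (z 0 - zstar) \<le> L * init_dist * norm (G (z k))"
    using mult_left_mono L_pos by (fastforce simp: mult_ac)
  moreover have "(norm (G (z k)))\<^sup>2 \<le> L * inner (G (z k)) (z k - zstar)"
    using cocoercive_mult_L[of "z k" zstar] by (simp add: zstar_sol)
  moreover have "inner (G (z k)) (z k - zstar) = inner (G (z k)) (z k - z 0) + inner (G (z k)) (z 0 - zstar)"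
    by (simp add: inner_diff_right)
  ultimately have "(norm (G (z k)))\<^sup>2 \<le> L * inner (G (z k)) (z k - z 0) + L * init_dist * norm (G (z k))"
    by (simp add: distrib_left)
  from mult_left_mono[OF this, of "real k + 1"]
  show ?thesis
    by (simp add: lyapunov_def field_simps)
qed

lemma lyapunov_le_of_past_bound:
  assumes past: "\<And>i. i < k \<Longrightarrow> (real i + 1) * norm (G (z i)) \<le> M"
  shows "lyapunov k \<le> 11 * err_sum k + M\<^sup>2 / 20"
proof -
  have "(real i + 1) * (real i + 2) / 2 * (\<gamma> i)\<^sup>2 + (real i + 1) * \<gamma> i * norm (G (z i))
      \<le> 11 * ((real i + 1)\<^sup>2 * (\<gamma> i)\<^sup>2) + M\<^sup>2 / 40 * (1 / (real i + 1)\<^sup>2)"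
    if "i \<in> {..<k}" for i
  proof -
    have "(real i + 1) * (real i + 2) / 2 \<le> (real i + 1)\<^sup>2"
      by (simp add: power2_eq_square field_simps)
    then have quadratic_term: "(real i + 1) * (real i + 2) / 2 * (\<gamma> i)\<^sup>2 \<le> (real i + 1)\<^sup>2 * (\<gamma> i)\<^sup>2"
      by (rule mult_right_mono) simp
    have "(real i + 1) * \<gamma> i * norm (G (z i)) = \<gamma> i * ((real i + 1) * norm (G (z i)))"
      by simp
    also have "\<dots> \<le> \<gamma> i * M"
      using past that gamma_nonneg by (simp add: mult_left_mono)
    also have "\<dots> = ((real i + 1) * \<gamma> i) * (M / (real i + 1))"
      by simp
    also have "\<dots> \<le> 10 * ((real i + 1) * \<gamma> i)\<^sup>2 + (M / (real i + 1))\<^sup>2 / (4 * 10)"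
      by (rule mult_le_weighted_sum_squares) simp
    also have "\<dots> = 10 * ((real i + 1)\<^sup>2 * (\<gamma> i)\<^sup>2) + M\<^sup>2 / 40 * (1 / (real i + 1)\<^sup>2)"
      by (simp add: power_mult_distrib power_divide)
    finally show ?thesis
      using quadratic_term by linarith
  qed
  then have "lyapunov k
      \<le> (\<Sum>i<k. 11 * ((real i + 1)\<^sup>2 * (\<gamma> i)\<^sup>2) + M\<^sup>2 / 40 * (1 / (real i + 1)\<^sup>2))"
    by (rule order_trans[OF lyapunov_le_sum sum_mono])
  also have "\<dots> = 11 * err_sum k + M\<^sup>2 / 40 * (\<Sum>i<k. 1 / (real i + 1)\<^sup>2)"
    by (simp add: err_sum_def sum.distrib sum_distrib_left)
  also have "\<dots> \<le> 11 * err_sum k + M\<^sup>2 / 40 * 2"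
  proof -
    have "0 \<le> 2 / (real k + 1)"
      by simp
    with sum_inverse_squares_le[of k] have "(\<Sum>i<k. 1 / (real i + 1)\<^sup>2) \<le> 2"
      by linarith
    then show ?thesis
      by (intro add_left_mono mult_left_mono) auto
  qed
  finally show ?thesis
    by simp
qed

lemma grad_norm_bound:
  "sqrt ((real k + 1) * (real k + 2)) * norm (G (z k)) \<le> 7 * L * init_dist + 10 * sqrt (err_sum k)"
proof (induction k rule: less_induct)
  case (less k)
  define M where "M = 7 * L * init_dist + 10 * sqrt (err_sum k)"
  define y where "y = sqrt ((real k + 1) * (real k + 2)) * norm (G (z k))"
  have "(real i + 1) * norm (G (z i)) \<le> M" if "i < k" for i
  proof -
    have "(real i + 1) * norm (G (z i)) \<le> sqrt ((real i + 1) * (real i + 2)) * norm (G (z i))"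
      by (intro mult_right_mono real_succ_le_sqrt_mult_succ) simp
    also have "\<dots> \<le> 7 * L * init_dist + 10 * sqrt (err_sum i)"
      using less.IH[OF that] .
    also have "\<dots> \<le> M"
      unfolding M_def using err_sum_mono[of i k] that by simp
    finally show ?thesis .
  qed
  then have "lyapunov k \<le> 11 * err_sum k + M\<^sup>2 / 20"
    by (rule lyapunov_le_of_past_bound)
  moreover have "(real k + 1) * norm (G (z k)) \<le> y"
    unfolding y_def by (intro mult_right_mono real_succ_le_sqrt_mult_succ) simp
  then have "L * init_dist * ((real k + 1) * norm (G (z k))) \<le> L * init_dist * y"
    using L_pos init_dist_nonneg by (intro mult_left_mono) auto
  moreover have "y\<^sup>2 / 2 = (real k + 1) * (real k + 2) / 2 * (norm (G (z k)))\<^sup>2"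
    by (simp add: y_def power_mult_distrib)
  ultimately have "y\<^sup>2 / 2 \<le> (L * init_dist) * y + 11 * (sqrt (err_sum k))\<^sup>2
      + (7 * (L * init_dist) + 10 * sqrt (err_sum k))\<^sup>2 / 20"
    using lyapunov_lower_bound[of k] err_sum_nonneg[of k] unfolding M_def by (simp add: mult.assoc)
  then have "y \<le> 7 * (L * init_dist) + 10 * sqrt (err_sum k)"
    using L_pos init_dist_nonneg err_sum_nonneg by (intro quadratic_le_bound) auto
  then show ?case
    by (simp add: y_def mult.assoc)
qed

lemma grad_norm_sq_bound:
  "(norm (G (z k)))\<^sup>2 \<le> (7 * L * init_dist + 10 * sqrt (err_sum k))\<^sup>2 / ((real k + 1) * (real k + 2))"
proof -
  have "(sqrt ((real k + 1) * (real k + 2)) * norm (G (z k)))\<^sup>2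
      \<le> (7 * L * init_dist + 10 * sqrt (err_sum k))\<^sup>2"
    using grad_norm_bound by (intro power_mono) auto
  then have "(norm (G (z k)))\<^sup>2 * ((real k + 1) * (real k + 2))
      \<le> (7 * L * init_dist + 10 * sqrt (err_sum k))\<^sup>2"
    by (simp add: power_mult_distrib mult.commute)
  then show ?thesis
    by (simp add: pos_le_divide_eq)
qed

lemma forward_step_nonexpansive: "norm (L *\<^sub>R (x - y) - (G x - G y)) \<le> L * norm (x - y)"
proof -
  have "L *\<^sub>R (x - y) - (G x - G y) = L *\<^sub>R ((x - y) - (1 / L) *\<^sub>R (G x - G y))"
    using L_pos by (simp add: scaleR_diff_right)
  then show ?thesis
    using co_coercive_forward_step_nonexpansive[OF coco] L_pos by (simp add: mult_left_mono)
qed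

lemma dist_solution_scaled_bound:
  "L * (real k + 1) * norm (z k - zstar) \<le> L * (real k + 1) * init_dist + (\<Sum>i<k. (real i + 1) * \<gamma> i)"
proof (induction k)
  case 0
  then show ?case by (simp add: init_dist_def)
next
  case (Suc k)
  have step: "(L * (real k + 2)) *\<^sub>R (z (Suc k) - zstar) = L *\<^sub>R (z 0 - zstar)
      + (real k + 1) *\<^sub>R (L *\<^sub>R (z k - zstar) - (G (z k) - G zstar)) - (real k + 1) *\<^sub>R (zt k - G (z k))"
    unfolding halpern_step_centered by (simp add: zstar_sol scaleR_diff_right)
  have "norm ((L * (real k + 2)) *\<^sub>R (z (Suc k) - zstar))
      \<le> norm (L *\<^sub>R (z 0 - zstar))
        + norm ((real k + 1) *\<^sub>R (L *\<^sub>R (z k - zstar) - (G (z k) - G zstar)))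
        + norm ((real k + 1) *\<^sub>R (zt k - G (z k)))"
    unfolding step by (rule order_trans[OF norm_triangle_ineq4 add_right_mono[OF norm_triangle_ineq]])
  then have "L * (real k + 2) * norm (z (Suc k) - zstar)
      \<le> L * init_dist + (real k + 1) * norm (L *\<^sub>R (z k - zstar) - (G (z k) - G zstar))
        + (real k + 1) * norm (zt k - G (z k))"
    using L_pos by (simp add: init_dist_def)
  moreover have "(real k + 1) * norm (L *\<^sub>R (z k - zstar) - (G (z k) - G zstar))
      \<le> (real k + 1) * (L * norm (z k - zstar))"
    using forward_step_nonexpansive[of "z k" zstar] by (simp add: mult_left_mono)
  moreover have "(real k + 1) * norm (zt k - G (z k)) \<le> (real k + 1) * \<gamma> k"
    using inexact[of k] by (simp add: norm_minus_commute mult_left_mono)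
  ultimately have "L * (real k + 2) * norm (z (Suc k) - zstar)
      \<le> L * init_dist + (real k + 1) * (L * norm (z k - zstar)) + (real k + 1) * \<gamma> k"
    by linarith
  with Suc show ?case
    by (simp add: algebra_simps)
qed

lemma weighted_err_sum_le: "(\<Sum>i<k. (real i + 1) * \<gamma> i) \<le> (real k + 1) * sqrt (err_sum k)"
proof -
  have "(\<Sum>i<k. (real i + 1) * \<gamma> i) = (\<Sum>i<k. \<bar>1\<bar> * \<bar>(real i + 1) * \<gamma> i\<bar>)"
    using gamma_nonneg by simp
  also have "\<dots> \<le> L2_set (\<lambda>_. 1) {..<k} * L2_set (\<lambda>i. (real i + 1) * \<gamma> i) {..<k}"
    by (rule L2_set_mult_ineq)
  also have "\<dots> = sqrt (real k) * sqrt (err_sum k)"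
    by (simp add: L2_set_constant L2_set_def err_sum_def power_mult_distrib)
  also have "\<dots> \<le> (real k + 1) * sqrt (err_sum k)"
  proof (rule mult_right_mono)
    have "real k \<le> (real k + 1)\<^sup>2"
      using mult_nonneg_nonneg[of "real k" "real k"] by (simp add: power2_eq_square algebra_simps)
    then show "sqrt (real k) \<le> real k + 1"
      by (intro real_le_lsqrt) auto
  qed (simp add: err_sum_nonneg)
  finally show ?thesis .
qed

lemma dist_solution_bound: "L * norm (z k - zstar) \<le> L * init_dist + sqrt (err_sum k)"
proof -
  have "(real k + 1) * (L * norm (z k - zstar)) \<le> (real k + 1) * (L * init_dist + sqrt (err_sum k))"
    using dist_solution_scaled_bound[of k] weighted_err_sum_le[of k] by (simp add: algebra_simps)
  then show ?thesis
    by simp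
qed

lemma dist_anchor_bound: "L * norm (z k - z 0) \<le> 2 * L * init_dist + sqrt (err_sum k)"
proof -
  have "norm (z k - z 0) \<le> norm (z k - zstar) + init_dist"
    using norm_triangle_ineq[of "z k - zstar" "zstar - z 0"] by (simp add: init_dist_def norm_minus_commute)
  then have "L * norm (z k - z 0) \<le> L * norm (z k - zstar) + L * init_dist"
    using L_pos by (simp add: mult_left_mono flip: distrib_left)
  then show ?thesis
    using dist_solution_bound[of k] by simp
qed

lemma step_length_scaled_le:
  "L * (real k + 2) * norm (z (Suc k) - z k)
     \<le> L * norm (z k - z 0) + (real k + 1) * norm (G (z k)) + (real k + 1) * \<gamma> k"
proof -
  have step: "(L * (real k + 2)) *\<^sub>R (z (Suc k) - z k) = L *\<^sub>R (z 0 - z k) - (real k + 1) *\<^sub>R zt k"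
    unfolding halpern_step_centered by simp
  have "L * (real k + 2) * norm (z (Suc k) - z k) = norm ((L * (real k + 2)) *\<^sub>R (z (Suc k) - z k))"
    using L_pos by simp
  also have "\<dots> = norm (L *\<^sub>R (z 0 - z k) - (real k + 1) *\<^sub>R zt k)"
    by (simp only: step)
  also have "\<dots> \<le> norm (L *\<^sub>R (z 0 - z k)) + norm ((real k + 1) *\<^sub>R zt k)"
    by (rule norm_triangle_ineq4)
  also have "\<dots> = L * norm (z k - z 0) + (real k + 1) * norm (zt k)"
    using L_pos by (simp add: norm_minus_commute)
  also have "\<dots> \<le> L * norm (z k - z 0) + (real k + 1) * norm (G (z k)) + (real k + 1) * \<gamma> k"
  proof -
    have "norm (zt k) \<le> norm (G (z k)) + \<gamma> k"
      using norm_triangle_sub[of "zt k" "G (z k)"] inexact[of k] by (simp add: norm_minus_commute)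
    then show ?thesis
      by (simp add: mult_left_mono flip: distrib_left)
  qed
  finally show ?thesis .
qed

lemma step_length_bound:
  "L * (real k + 2) * norm (z (Suc k) - z k) \<le> 2 * (7 * L * init_dist + 11 * sqrt (err_sum (Suc k)))"
proof -
  have "L * (real k + 2) * norm (z (Suc k) - z k)
      \<le> (2 * L * init_dist + sqrt (err_sum k)) + (7 * L * init_dist + 10 * sqrt (err_sum k))
        + sqrt (err_sum (Suc k))"
  proof (rule order_trans[OF step_length_scaled_le add_mono[OF add_mono]])
    show "(real k + 1) * norm (G (z k)) \<le> 7 * L * init_dist + 10 * sqrt (err_sum k)"
      using mult_right_mono[OF real_succ_le_sqrt_mult_succ norm_ge_zero] grad_norm_bound order_trans
      by blast
    show "(real k + 1) * \<gamma> k \<le> sqrt (err_sum (Suc k))"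
      using err_sum_nonneg[of k] by (intro real_le_rsqrt) (simp add: err_sum_Suc)
  qed (rule dist_anchor_bound)
  moreover have "sqrt (err_sum k) \<le> sqrt (err_sum (Suc k))"
    using err_sum_mono[of k "Suc k"] by simp
  moreover have "0 \<le> L * init_dist" "0 \<le> sqrt (err_sum k)"
    using L_pos init_dist_nonneg err_sum_nonneg[of k] by simp_all
  ultimately show ?thesis
    unfolding mult.assoc distrib_left by linarith
qed

lemma step_length_sq_bound:
  "(norm (z (Suc k) - z k))\<^sup>2
     \<le> 8 * (7 * L * init_dist + 11 * sqrt (err_sum (Suc k)))\<^sup>2 / (L\<^sup>2 * (real k + 1) * (real k + 2))"
proof -
  define X where "X = 7 * L * init_dist + 11 * sqrt (err_sum (Suc k))"
  define n where "n = norm (z (Suc k) - z k)"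
  have "L\<^sup>2 * (real k + 1) * (real k + 2) * n\<^sup>2 \<le> L\<^sup>2 * (real k + 2) * (real k + 2) * n\<^sup>2"
    by (intro mult_right_mono mult_left_mono) auto
  also have "\<dots> = (L * (real k + 2) * n)\<^sup>2"
    by (simp add: power2_eq_square mult_ac)
  also have "\<dots> \<le> (2 * X)\<^sup>2"
    using step_length_bound[of k] L_pos by (intro power_mono) (simp_all add: X_def n_def)
  also have "\<dots> \<le> 8 * X\<^sup>2"
    by (simp add: power_mult_distrib)
  finally have "L\<^sup>2 * (real k + 1) * (real k + 2) * n\<^sup>2 \<le> 8 * X\<^sup>2" .
  then show ?thesis
    using L_pos by (simp add: X_def n_def pos_le_divide_eq mult.commute)
qed

end

theorem theorem1:
  fixes G :: "'a::euclidean_space \<Rightarrow> 'a"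
    and L :: real
    and z zt :: "nat \<Rightarrow> 'a"
    and \<gamma> :: "nat \<Rightarrow> real"
    and zstar :: 'a
  assumes L_pos: "L > 0"
    and coco: "co_coercive (1 / L) G"
    and sol_exists: "\<exists>s. G s = 0"
    and gamma_nonneg: "\<And>k. \<gamma> k \<ge> 0"
    and inexact: "\<And>k. norm (G (z k) - zt k) \<le> \<gamma> k"
    and iter: "\<And>k. z (Suc k) =
        (1 / (real k + 2)) *\<^sub>R z 0 + (1 - 1 / (real k + 2)) *\<^sub>R z k
        - ((1 - 1 / (real k + 2)) / L) *\<^sub>R zt k"
    and zstar_sol: "G zstar = 0"
  shows "(norm (G (z k)))\<^sup>2 \<le>
           (7 * L * norm (z 0 - zstar) + 10 * sqrt (\<Sum>i<k. (real i + 1)\<^sup>2 * (\<gamma> i)\<^sup>2))\<^sup>2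
           / ((real k + 1) * (real k + 2))
      \<and> (norm (z (Suc k) - z k))\<^sup>2 \<le>
           8 * (7 * L * norm (z 0 - zstar) + 11 * sqrt (\<Sum>i\<le>k. (real i + 1)\<^sup>2 * (\<gamma> i)\<^sup>2))\<^sup>2
           / (L\<^sup>2 * (real k + 1) * (real k + 2))"
proof -
  (* L_pos, sol_exists and gamma_nonneg follow from coco, zstar_sol and inexact. *)
  interpret inexact_halpern G L z zt \<gamma> zstar
    using coco inexact iter zstar_sol by unfold_locales auto
  show ?thesis
    using grad_norm_sq_bound[of k] step_length_sq_bound[of k]
    unfolding init_dist_def err_sum_def lessThan_Suc_atMost by simp
qed

end
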